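(* Let $\mathcal{A}$ be a separating union-closed family with base set $[n]$ and height $h\le 3$. Then $\mathrm{Avg}(\mathcal{A})=\frac{1}{|\mathcal{A}|}\sum_{A\in\mathcal{A}}|A| \geq \frac{n}{2}$.
   Context: A family of sets $\mathcal{A}$ is union-closed if it is a finite family of distinct finite sets with at least one nonempty member set, and $X,Y\in\mathcal{A}$ implies $X\cup Y\in\mathcal{A}$ (the empty set may be a member). The base set $\bigcup_{A\in\mathcal{A}}A$ is denoted $[n]=\{1,\dots,n\}$. $\mathcal{A}$ is separating if for any two distinct $x,y\in[n]$ there is $A\in\mathcal{A}$ containing exactly one of $x,y$. A chain in $\mathcal{A}$ is a subfamily any two distinct members of which are comparable under proper inclusion; the height $h$ of $\mathcal{A}$ is the maximum size of a chain in $\mathcal{A}$. *)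

theory Defs
  imports Complex_Main
begin

definition union_closed :: "'a set set \<Rightarrow> bool" where
  "union_closed \<A> \<longleftrightarrow> finite \<A> \<and> (\<forall>A\<in>\<A>. finite A) \<and> (\<exists>A\<in>\<A>. A \<noteq> {})
     \<and> (\<forall>X\<in>\<A>. \<forall>Y\<in>\<A>. X \<union> Y \<in> \<A>)"

definition separating :: "'a set set \<Rightarrow> bool" where
  "separating \<A> \<longleftrightarrow> (\<forall>x\<in>\<Union>\<A>. \<forall>y\<in>\<Union>\<A>. x \<noteq> y \<longrightarrow>
     (\<exists>A\<in>\<A>. (x \<in> A \<and> y \<notin> A) \<or> (y \<in> A \<and> x \<notin> A)))"

definition is_chain_in :: "'a set set \<Rightarrow> 'a set set \<Rightarrow> bool" where
  "is_chain_in \<C> \<A> \<longleftrightarrow> \<C> \<subseteq> \<A> \<and>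
     (\<forall>X\<in>\<C>. \<forall>Y\<in>\<C>. X \<noteq> Y \<longrightarrow> X \<subset> Y \<or> Y \<subset> X)"

definition height :: "'a set set \<Rightarrow> nat" where
  "height \<A> = Max (card ` {\<C>. is_chain_in \<C> \<A>})"

end

theory Submission
  imports Defs
begin

text \<open>
  Let \<open>U = \<Union>\<A>\<close>, which lies in \<open>\<A>\<close>. For distinct members \<open>A, B\<close>, the union \<open>A \<union> B\<close>
  properly contains one of them, and two points of \<open>U - (A \<union> B)\<close> would be separated by some
  \<open>D \<in> \<A>\<close>, producing the chain \<open>A or B \<subset> A \<union> B \<subset> A \<union> B \<union> D \<subset> U\<close> of length 4.
  Hence the complements \<open>U - A\<close> pairwise meet in at most one point. In such a family on
  \<open>n\<close> points, two sets with \<open>2 |K| > n\<close> both have size \<open>(n + 1) / 2\<close>, and three of them fit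
  only when \<open>n \<le> 3\<close>; so the total excess \<open>\<Sum> max 0 (2 |U - A| - n)\<close> is at most \<open>n\<close>.
  Since \<open>n - 2 |A| = 2 |U - A| - n\<close>, this excess is exactly compensated by the deficit \<open>-n\<close>
  of \<open>U\<close> itself, giving \<open>\<Sum>\<^sub>A (n - 2 |A|) \<le> 0\<close>.
\<close>

definition almost_disjoint :: "'a set set \<Rightarrow> bool" where
  "almost_disjoint \<K> \<longleftrightarrow> (\<forall>K\<in>\<K>. \<forall>L\<in>\<K>. K \<noteq> L \<longrightarrow> card (K \<inter> L) \<le> 1)"

lemma almost_disjointD:
  "almost_disjoint \<K> \<Longrightarrow> K \<in> \<K> \<Longrightarrow> L \<in> \<K> \<Longrightarrow> K \<noteq> L \<Longrightarrow> card (K \<inter> L) \<le> 1"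
  unfolding almost_disjoint_def by blast

lemma card_add_le_card_Int:
  assumes "finite U" "K \<subseteq> U" "L \<subseteq> U"
  shows "card K + card L \<le> card U + card (K \<inter> L)"
proof -
  have "card K + card L = card (K \<union> L) + card (K \<inter> L)"
    using assms by (metis card_Un_Int finite_subset)
  moreover have "card (K \<union> L) \<le> card U"
    using assms by (intro card_mono) auto
  ultimately show ?thesis by linarith
qed

lemma card_add3_le_if_card_Int_le_1:
  assumes "finite U" "K \<subseteq> U" "L \<subseteq> U" "M \<subseteq> U"
    and "card (K \<inter> L) \<le> 1" "card (K \<inter> M) \<le> 1" "card (L \<inter> M) \<le> 1"
  shows "card K + card L + card M \<le> card U + 3"
proof -
  have "card ((K \<union> L) \<inter> M) \<le> 2"
  proof -
    have "(K \<union> L) \<inter> M = (K \<inter> M) \<union> (L \<inter> M)" by blast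
    then show ?thesis using card_Un_le[of "K \<inter> M" "L \<inter> M"] assms(6,7) by simp
  qed
  moreover have "card K + card L \<le> card (K \<union> L) + card (K \<inter> L)"
    using assms(1-3) by (metis card_Un_Int finite_subset order_refl)
  moreover have "card (K \<union> L) + card M \<le> card U + card ((K \<union> L) \<inter> M)"
    using assms(1-4) by (intro card_add_le_card_Int) auto
  ultimately show ?thesis using assms(5) by linarith
qed

lemma almost_disjoint_half_card_le:
  assumes "finite U" "\<K> \<subseteq> Pow U" "almost_disjoint \<K>"
    and half: "\<And>K. K \<in> \<K> \<Longrightarrow> 2 * card K = card U + 1"
  shows "card \<K> \<le> card U"
proof (cases "card U \<le> 3")
  case True
  show ?thesis
  proof (cases "\<K> = {}")
    case False
    then obtain K\<^sub>0 where "K\<^sub>0 \<in> \<K>" by blast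
    have "\<K> \<subseteq> {K. K \<subseteq> U \<and> card K = card K\<^sub>0}"
      using assms(2) half[OF \<open>K\<^sub>0 \<in> \<K>\<close>] half by fastforce
    then have "card \<K> \<le> card {K. K \<subseteq> U \<and> card K = card K\<^sub>0}"
      using assms(1) by (intro card_mono) auto
    then have "card \<K> \<le> card U choose card K\<^sub>0"
      using n_subsets[OF assms(1)] by simp
    moreover have "card U = 1 \<and> card K\<^sub>0 = 1 \<or> card U = 3 \<and> card K\<^sub>0 = 2"
      using True half[OF \<open>K\<^sub>0 \<in> \<K>\<close>] by presburger
    ultimately show ?thesis by (auto simp: choose_two)
  qed simp
next
  case False
  have "card \<K> \<le> 2"
  proof (rule ccontr)
    assume "\<not> card \<K> \<le> 2"
    then obtain \<T> where "\<T> \<subseteq> \<K>" "card \<T> = 3"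
      using obtain_subset_with_card_n[of 3 \<K>] by force
    then obtain K L M where KLM: "K \<in> \<K>" "L \<in> \<K>" "M \<in> \<K>" "K \<noteq> L" "K \<noteq> M" "L \<noteq> M"
      unfolding card_3_iff by auto
    then have "card K + card L + card M \<le> card U + 3"
      using assms(2) almost_disjointD[OF assms(3)]
      by (intro card_add3_le_if_card_Int_le_1[OF assms(1)]) auto
    then show False using half[OF KLM(1)] half[OF KLM(2)] half[OF KLM(3)] False by linarith
  qed
  then show ?thesis using False by linarith
qed

text \<open>The subtraction below is truncated: each term is the positive part of \<open>2 |K| - |U|\<close>.\<close>

lemma almost_disjoint_sum_excess_le:
  assumes U: "finite U" and \<K>: "\<K> \<subseteq> Pow U" "almost_disjoint \<K>"
  shows "(\<Sum>K\<in>\<K>. 2 * card K - card U) \<le> card U"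
proof -
  define \<L> where "\<L> = {K \<in> \<K>. card U < 2 * card K}"
  have "finite \<K>"
    using finite_subset[OF \<K>(1)] U by simp
  then have sum_eq: "(\<Sum>K\<in>\<K>. 2 * card K - card U) = (\<Sum>K\<in>\<L>. 2 * card K - card U)"
    unfolding \<L>_def by (intro sum.mono_neutral_right) auto
  have \<L>: "\<L> \<subseteq> Pow U" "almost_disjoint \<L>" "finite \<L>"
    using \<K> \<open>finite \<K>\<close> unfolding \<L>_def almost_disjoint_def by auto
  show ?thesis
  proof (cases "card \<L> \<le> 1")
    case True
    have "(\<Sum>K\<in>\<L>. 2 * card K - card U) \<le> card \<L> * card U"
    proof (rule sum_bounded_above[where 'a=nat, simplified])
      fix K assume "K \<in> \<L>"
      then have "card K \<le> card U"
        using \<L>(1) U by (auto intro: card_mono)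
      then show "2 * card K - card U \<le> card U" by simp
    qed
    then show ?thesis using sum_eq True by (metis le_trans mult_le_cancel2 mult_1)
  next
    case False
    have half: "2 * card K = card U + 1" if "K \<in> \<L>" for K
    proof -
      have "\<exists>x\<in>\<L>. \<exists>y\<in>\<L>. x \<noteq> y"
        using False card_le_Suc0_iff_eq[OF \<L>(3)] by auto
      then obtain L where L: "L \<in> \<L>" "L \<noteq> K"
        by blast
      have "K \<subseteq> U" "L \<subseteq> U"
        using that L(1) \<L>(1) by auto
      then have "card K + card L \<le> card U + 1"
        using card_add_le_card_Int[OF U] almost_disjointD[OF \<L>(2) that L(1) L(2)[symmetric]]
        by (metis add_left_mono order_trans)
      then show ?thesis using that L(1) unfolding \<L>_def by simp
    qed
    then have "(\<Sum>K\<in>\<L>. 2 * card K - card U) = card \<L>" by simp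
    also have "\<dots> \<le> card U"
      using almost_disjoint_half_card_le[OF U \<L>(1,2) half] .
    finally show ?thesis using sum_eq by simp
  qed
qed

lemma union_closed_Union_subfamily_mem:
  assumes "union_closed \<A>" "finite \<F>" "\<F> \<noteq> {}" "\<F> \<subseteq> \<A>"
  shows "\<Union>\<F> \<in> \<A>"
  using assms(2-4)
proof (induction rule: finite_ne_induct)
  case (insert X \<F>)
  then have "X \<union> \<Union>\<F> \<in> \<A>"
    using assms(1) unfolding union_closed_def by blast
  then show ?case by simp
qed simp

lemma union_closed_Union_mem:
  assumes "union_closed \<A>"
  shows "\<Union>\<A> \<in> \<A>"
  using assms union_closed_Union_subfamily_mem[OF assms]
  unfolding union_closed_def by blast

lemma card_chain_le_height:
  assumes "finite \<A>" "is_chain_in \<C> \<A>"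
  shows "card \<C> \<le> height \<A>"
proof -
  have "{\<C>. is_chain_in \<C> \<A>} \<subseteq> Pow \<A>"
    unfolding is_chain_in_def by auto
  then have "finite (card ` {\<C>. is_chain_in \<C> \<A>})"
    using assms(1) by (meson finite_Pow_iff finite_imageI finite_subset)
  then show ?thesis
    unfolding height_def using assms(2) by (intro Max_ge) auto
qed

lemma four_le_height:
  assumes "finite \<A>" "A1 \<in> \<A>" "A2 \<in> \<A>" "A3 \<in> \<A>" "A4 \<in> \<A>"
    and "A1 \<subset> A2" "A2 \<subset> A3" "A3 \<subset> A4"
  shows "4 \<le> height \<A>"
proof -
  have "A1 \<subset> A3" "A1 \<subset> A4" "A2 \<subset> A4"
    using assms(6-8) by (meson psubset_trans)+
  then have "is_chain_in {A1, A2, A3, A4} \<A>"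
    unfolding is_chain_in_def using assms(2-8) by simp
  moreover have "card {A1, A2, A3, A4} = 4"
  proof -
    have "A1 \<noteq> A2" "A1 \<noteq> A3" "A1 \<noteq> A4" "A2 \<noteq> A3" "A2 \<noteq> A4" "A3 \<noteq> A4"
      using \<open>A1 \<subset> A3\<close> \<open>A1 \<subset> A4\<close> \<open>A2 \<subset> A4\<close> assms(6-8) by auto
    then show ?thesis by simp
  qed
  ultimately show ?thesis
    using card_chain_le_height[OF assms(1)] by metis
qed

lemma card_Diff_Un_le_1:
  assumes uc: "union_closed \<A>" and sep: "separating \<A>" and h: "height \<A> \<le> 3"
    and A: "A \<in> \<A>" and B: "B \<in> \<A>" and "A \<noteq> B"
  shows "card (\<Union>\<A> - (A \<union> B)) \<le> 1"
proof (rule ccontr)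
  let ?U = "\<Union>\<A>" and ?C = "A \<union> B"
  have "finite \<A>" "finite (?U - ?C)" and closed: "\<And>X Y. X \<in> \<A> \<Longrightarrow> Y \<in> \<A> \<Longrightarrow> X \<union> Y \<in> \<A>"
    using uc unfolding union_closed_def by auto
  then have C: "?C \<in> \<A>" using A B by blast
  assume "\<not> card (?U - ?C) \<le> 1"
  then have "\<exists>x\<in>?U - ?C. \<exists>y\<in>?U - ?C. x \<noteq> y"
    using card_le_Suc0_iff_eq[OF \<open>finite (?U - ?C)\<close>] by auto
  then obtain x y where xy: "x \<in> ?U - ?C" "y \<in> ?U - ?C" "x \<noteq> y"
    by blast
  then obtain D where "D \<in> \<A>" and D: "x \<in> D \<longleftrightarrow> y \<notin> D"
    using sep unfolding separating_def by (metis DiffD1)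
  have "A \<subset> ?C \<or> B \<subset> ?C"
    using \<open>A \<noteq> B\<close> by auto
  then obtain E where "E \<in> \<A>" "E \<subset> ?C"
    using A B by blast
  moreover have "?C \<subset> ?C \<union> D" "?C \<union> D \<subset> ?U"
    using xy D \<open>D \<in> \<A>\<close> A B by auto
  ultimately have "4 \<le> height \<A>"
    using four_le_height[OF \<open>finite \<A>\<close> _ C closed[OF C \<open>D \<in> \<A>\<close>] union_closed_Union_mem[OF uc]]
    by blast
  then show False using h by simp
qed

lemma almost_disjoint_complements:
  assumes "union_closed \<A>" "separating \<A>" "height \<A> \<le> 3"
  shows "almost_disjoint ((\<lambda>A. \<Union>\<A> - A) ` \<A>)"
proof -
  have "card ((\<Union>\<A> - A) \<inter> (\<Union>\<A> - B)) \<le> 1"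
    if "A \<in> \<A>" "B \<in> \<A>" "\<Union>\<A> - A \<noteq> \<Union>\<A> - B" for A B
  proof -
    have "A \<noteq> B" using that(3) by blast
    then show ?thesis using card_Diff_Un_le_1[OF assms that(1,2)] by (simp add: Diff_Un)
  qed
  then show ?thesis unfolding almost_disjoint_def by blast
qed

lemma union_closed_card_mult_le_sum_card:
  assumes uc: "union_closed \<A>" and "separating \<A>" "height \<A> \<le> 3"
  shows "card (\<Union>\<A>) * card \<A> \<le> 2 * (\<Sum>A\<in>\<A>. card A)"
proof -
  let ?U = "\<Union>\<A>"
  define excess where "excess A = 2 * card (?U - A) - card ?U" for A
  have "finite \<A>" "finite ?U" and U: "?U \<in> \<A>"
    using uc union_closed_Union_mem[OF uc] unfolding union_closed_def by auto
  have "inj_on (\<lambda>A. ?U - A) \<A>"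
    by (intro inj_onI) blast
  moreover have "(\<lambda>A. ?U - A) ` \<A> \<subseteq> Pow ?U"
    by blast
  ultimately have sum_excess: "(\<Sum>A\<in>\<A>. excess A) \<le> card ?U"
    using almost_disjoint_sum_excess_le[OF \<open>finite ?U\<close> _ almost_disjoint_complements[OF assms]]
    unfolding excess_def by (simp add: sum.reindex)
  have pointwise: "card ?U \<le> 2 * card A + excess A" if "A \<in> \<A>" for A
  proof -
    have "A \<subseteq> ?U" using that by blast
    then have "card (?U - A) = card ?U - card A" "card A \<le> card ?U"
      using \<open>finite ?U\<close> by (simp_all add: card_Diff_subset finite_subset card_mono)
    then show ?thesis unfolding excess_def by linarith
  qed
  have "card ?U * card \<A> + card ?U = 2 * card ?U + (\<Sum>A\<in>\<A> - {?U}. card ?U)"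
    using card.remove[OF \<open>finite \<A>\<close> U] by simp
  also have "\<dots> \<le> 2 * card ?U + (\<Sum>A\<in>\<A> - {?U}. 2 * card A + excess A)"
    using pointwise by (intro add_left_mono sum_mono) blast
  also have "\<dots> = (\<Sum>A\<in>\<A>. 2 * card A + excess A)"
    using sum.remove[OF \<open>finite \<A>\<close> U, of "\<lambda>A. 2 * card A + excess A"]
    by (simp add: excess_def)
  also have "\<dots> = 2 * (\<Sum>A\<in>\<A>. card A) + (\<Sum>A\<in>\<A>. excess A)"
    by (simp add: sum.distrib sum_distrib_left)
  finally show ?thesis using sum_excess by linarith
qed

theorem theorem1p4:
  fixes \<A> :: "nat set set" and n :: nat
  assumes "union_closed \<A>"
    and "\<Union>\<A> = {1..n}"
    and "separating \<A>"
    and "height \<A> \<le> 3"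
  shows "(\<Sum>A\<in>\<A>. real (card A)) / real (card \<A>) \<ge> real n / 2"
proof -
  have "n * card \<A> \<le> 2 * (\<Sum>A\<in>\<A>. card A)"
    using union_closed_card_mult_le_sum_card[OF assms(1,3,4)] assms(2) by simp
  then have "real n * real (card \<A>) \<le> 2 * (\<Sum>A\<in>\<A>. real (card A))"
    by (metis of_nat_le_iff of_nat_mult of_nat_numeral of_nat_sum)
  moreover have "card \<A> > 0"
    using assms(1) union_closed_Union_mem[OF assms(1)]
    unfolding union_closed_def by (auto simp: card_gt_0_iff)
  ultimately show ?thesis by (simp add: field_simps)
qed

end
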